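(* Let $n=2$, $m=1$, $c_1=10$, so $\mathcal{X}=\{0,1,\dots,10\}$. Suppose bidder 2 answers every demand query at price $p\ge0$ as follows: if $p<94/10$ she answers $10$; if $p=94/10$ she answers either $10$ or $0$; if $p>94/10$ she answers $0$. Let $\{p^1,\dots,p^{\ell}\}\subset[0,\infty)$ be the finite set of prices at which bidder 2 is queried, with responses $x_2^*(p^r)$. For $\lambda>0$ let $\theta^*$ be any (local) minimizer of the L2-regularized loss $$L^{\lambda}(\theta)=\sum_{r=1}^{\ell}\Big(\mathcal{M}_\theta(\hat x_2^*(p^r))-p^r\hat x_2^*(p^r)-\big(\mathcal{M}_\theta(x_2^*(p^r))-p^r x_2^*(p^r)\big)\Big)^+ +\lambda\|\theta\|_2^2,$$ where $\hat x_2^*(p^r)\in\arg\max_{x\in\mathcal{X}}\big(\mathcal{M}_\theta(x)-p^r x\big)$ and $\mathcal{M}_\theta$ is an MVNN. Then the MVNN $\mathcal{M}_{\theta^*}:\mathcal{X}\to\mathbb{R}$ is linear.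
   Context: An MVNN (monotone-value neural network) on $\mathcal{X}=\{0,\dots,c_1\}\times\cdots\times\{0,\dots,c_m\}$ with parameters $\theta=(W,b)$ is $\mathcal{M}_\theta(x)=W^{K}\varphi_{0,t^{K-1}}\big(\cdots\varphi_{0,t^{1}}(W^{1}(Dx)+b^{1})\cdots\big)$, where $D=\mathrm{diag}(1/c_1,\dots,1/c_m)$ is a fixed normalization, the weight matrices $W^k$ (trainable) have nonnegative entries, the biases $b^k$ (trainable) have nonpositive entries, and the activation is the bounded ReLU $\varphi_{0,t}(z)=\min(t,\max(0,z))$ applied componentwise with fixed cutoffs $t^k>0$ (no linear skip connections). $\|\theta\|_2^2$ is the sum of squares of all weights and biases. "Linear" means $\mathcal{M}_{\theta^*}(x)=\alpha x$ for all $x\in\mathcal{X}$, for some constant $\alpha$. $(\cdot)^+=\max(\cdot,0)$. *)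

theory Defs
  imports Complex_Main
begin

text \<open>Parameters of an MVNN: weights W k i j (layer k = 1..K, row i < d k, column j < d (k-1))
 and biases b k i (layer k = 1..K-1, i < d k).  Architecture: K layers, widths d, cutoffs t.\<close>

type_synonym params = "(nat \<Rightarrow> nat \<Rightarrow> nat \<Rightarrow> real) \<times> (nat \<Rightarrow> nat \<Rightarrow> real)"

definition brelu :: "real \<Rightarrow> real \<Rightarrow> real" where
  "brelu t z = min t (max 0 z)"

text \<open>Hidden layer values; input dimension m = 1 and D = diag(1/c_1) with c_1 = 10.\<close>
fun hidden :: "(nat \<Rightarrow> nat) \<Rightarrow> (nat \<Rightarrow> real) \<Rightarrow> params \<Rightarrow> nat \<Rightarrow> nat \<Rightarrow> nat \<Rightarrow> real" where
  "hidden d t \<theta> x 0 = (\<lambda>j. if j = 0 then real x / 10 else 0)"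
| "hidden d t \<theta> x (Suc k) = (\<lambda>i. brelu (t (Suc k))
      ((\<Sum>j<d k. fst \<theta> (Suc k) i j * hidden d t \<theta> x k j) + snd \<theta> (Suc k) i))"

definition mvnn :: "nat \<Rightarrow> (nat \<Rightarrow> nat) \<Rightarrow> (nat \<Rightarrow> real) \<Rightarrow> params \<Rightarrow> nat \<Rightarrow> real" where
  "mvnn K d t \<theta> x = (\<Sum>j<d (K - 1). fst \<theta> K 0 j * hidden d t \<theta> x (K - 1) j)"

text \<open>Admissible parameters: nonnegative weights, nonpositive biases, all entries outside
 the architecture's index ranges equal to zero (so the parameter space is a finite-dimensional
 Euclidean space).\<close>
definition admissible :: "nat \<Rightarrow> (nat \<Rightarrow> nat) \<Rightarrow> params \<Rightarrow> bool" where
  "admissible K d \<theta> \<longleftrightarrow>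
     (\<forall>k i j. (1 \<le> k \<and> k \<le> K \<and> i < d k \<and> j < d (k - 1)) \<longrightarrow> fst \<theta> k i j \<ge> 0) \<and>
     (\<forall>k i j. \<not> (1 \<le> k \<and> k \<le> K \<and> i < d k \<and> j < d (k - 1)) \<longrightarrow> fst \<theta> k i j = 0) \<and>
     (\<forall>k i. (1 \<le> k \<and> k < K \<and> i < d k) \<longrightarrow> snd \<theta> k i \<le> 0) \<and>
     (\<forall>k i. \<not> (1 \<le> k \<and> k < K \<and> i < d k) \<longrightarrow> snd \<theta> k i = 0)"

definition param_normsq :: "nat \<Rightarrow> (nat \<Rightarrow> nat) \<Rightarrow> params \<Rightarrow> real" where
  "param_normsq K d \<theta> =
     (\<Sum>k\<in>{1..K}. \<Sum>i<d k. \<Sum>j<d (k - 1). (fst \<theta> k i j)\<^sup>2) +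
     (\<Sum>k\<in>{1..<K}. \<Sum>i<d k. (snd \<theta> k i)\<^sup>2)"

definition param_diff :: "params \<Rightarrow> params \<Rightarrow> params" where
  "param_diff \<theta> \<eta> = ((\<lambda>k i j. fst \<theta> k i j - fst \<eta> k i j), (\<lambda>k i. snd \<theta> k i - snd \<eta> k i))"

definition pos_part :: "real \<Rightarrow> real" where
  "pos_part z = max z 0"

text \<open>The L2-regularised loss; xhat \<theta> p is the chosen argmax of x \<mapsto> M_\<theta>(x) - p x on X,
 resp p is bidder 2's reported demand at price p.\<close>
definition loss :: "nat \<Rightarrow> (nat \<Rightarrow> nat) \<Rightarrow> (nat \<Rightarrow> real) \<Rightarrow> real set \<Rightarrow> (real \<Rightarrow> nat)
    \<Rightarrow> (params \<Rightarrow> real \<Rightarrow> nat) \<Rightarrow> real \<Rightarrow> params \<Rightarrow> real" where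
  "loss K d t Ps resp xhat lam \<theta> =
     (\<Sum>p\<in>Ps. pos_part ((mvnn K d t \<theta> (xhat \<theta> p) - p * real (xhat \<theta> p))
                       - (mvnn K d t \<theta> (resp p) - p * real (resp p))))
     + lam * param_normsq K d \<theta>"

end

theory Submission
  imports Defs
begin

text \<open>
Only the fact that every reported demand is 0 or 10 matters.  The data term of the loss then
sees the network M only through M 0 = 0, M 10 and the maxima over x of M x - p x.  It does not
increase if M 10 is kept and every new value M' x is at most M x or at most x/10 * M 10, since
x/10 * M 10 - p x is bounded by its values at x = 0 and x = 10.

We perturb a single neuron (k, i), replacing its weights w and bias b by (1 - \<eta>) w and
(1 - \<eta>) b + \<eta> a.  With a = 0 this lowers the network pointwise and, for a nonzero row,
strictly lowers the L2 norm; if the neuron is inactive or saturated at input 10, M 10 is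
unchanged, contradicting local minimality.  So at input 10 no neuron saturates, and every
neuron with nonzero bias is active.  For such a neuron (b < 0) we take for a its preactivation
at 10: everything at input 10 stays fixed while weight mass moves into the bias, so the norm
drops; and as an unsaturated network with nonpositive biases is subhomogeneous on [0, 10], the
data term again does not increase.  Hence all biases vanish, and a network with zero biases
that does not saturate at 10 is linear on [0, 10].
\<close>

definition preact :: "(nat \<Rightarrow> nat) \<Rightarrow> (nat \<Rightarrow> real) \<Rightarrow> params \<Rightarrow> nat \<Rightarrow> nat \<Rightarrow> nat \<Rightarrow> real" where
  "preact d t \<theta> x k i = (\<Sum>j<d (k - 1). fst \<theta> k i j * hidden d t \<theta> x (k - 1) j) + snd \<theta> k i"

lemma hidden_preact: "0 < k \<Longrightarrow> hidden d t \<theta> x k i = brelu (t k) (preact d t \<theta> x k i)"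
  by (cases k) (simp_all add: preact_def)

declare hidden.simps(2) [simp del]

lemma brelu_mono: "z \<le> z' \<Longrightarrow> brelu t z \<le> brelu t z'"
  unfolding brelu_def by auto

lemma brelu_nonneg: "0 \<le> t \<Longrightarrow> 0 \<le> brelu t z"
  unfolding brelu_def by auto

lemma brelu_nonpos: "0 \<le> t \<Longrightarrow> z \<le> 0 \<Longrightarrow> brelu t z = 0"
  unfolding brelu_def by auto

lemma brelu_saturated: "0 \<le> t \<Longrightarrow> t \<le> z \<Longrightarrow> brelu t z = t"
  unfolding brelu_def by auto

lemma brelu_scale_le_self:
  assumes "0 \<le> s" "s \<le> 1" "0 \<le> t"
  shows "brelu t (s * z) \<le> brelu t z"
proof (cases "z \<le> 0")
  case True
  then show ?thesis using assms by (simp add: brelu_nonpos brelu_nonneg mult_nonneg_nonpos)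
next
  case False
  then show ?thesis using assms by (intro brelu_mono) (simp add: mult_left_le_one_le)
qed

lemma brelu_scale_le:
  assumes "0 \<le> s" "0 \<le> t" "z \<le> t"
  shows "brelu t (s * z) \<le> s * brelu t z"
proof (cases "z \<le> 0")
  case True
  then show ?thesis using assms by (simp add: brelu_nonpos brelu_nonneg mult_nonneg_nonpos)
next
  case False
  then have "brelu t z = z" using assms unfolding brelu_def by simp
  then show ?thesis using assms False unfolding brelu_def by simp
qed

lemma brelu_scale_ge:
  assumes "0 \<le> s" "s \<le> 1" "0 \<le> t"
  shows "s * brelu t z \<le> brelu t (s * z)"
proof (cases "z \<le> 0")
  case True
  then show ?thesis using assms by (simp add: brelu_nonpos brelu_nonneg mult_nonneg_nonpos)
next
  case False
  have "s * z \<le> z" using assms False by (simp add: mult_left_le_one_le)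
  then have "s * min t z \<le> min t (s * z)"
    using assms by (auto simp: min_def mult_left_le_one_le mult_left_mono)
  then show ?thesis using assms False unfolding brelu_def by simp
qed

lemma eventually_brelu_shrink_eq:
  assumes "0 < t" "z \<le> 0 \<or> t < z"
  shows "\<forall>\<^sub>F \<eta> in at_right 0. brelu t ((1 - \<eta>) * z) = brelu t z"
proof (cases "z \<le> 0")
  case True
  show ?thesis
    using eventually_at_right_real[OF zero_less_one]
  proof eventually_elim
    case (elim \<eta>)
    then show ?case using True assms(1) by (simp add: brelu_nonpos mult_nonneg_nonpos)
  qed
next
  case False
  then have "t < z" using assms(2) by simp
  have "((\<lambda>\<eta>. (1 - \<eta>) * z) \<longlongrightarrow> (1 - 0) * z) (at_right 0)"
    by (intro tendsto_intros)
  then have "\<forall>\<^sub>F \<eta> in at_right 0. t < (1 - \<eta>) * z"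
    using \<open>t < z\<close> by (intro order_tendstoD(1)) simp_all
  then show ?thesis
  proof eventually_elim
    case (elim \<eta>)
    then show ?case using \<open>t < z\<close> assms(1) by (simp add: brelu_saturated)
  qed
qed

lemma admissible_weight_nonneg: "admissible K d \<theta> \<Longrightarrow> 0 \<le> fst \<theta> k i j"
  unfolding admissible_def by (cases "1 \<le> k \<and> k \<le> K \<and> i < d k \<and> j < d (k - 1)") auto

lemma admissible_bias_nonpos: "admissible K d \<theta> \<Longrightarrow> snd \<theta> k i \<le> 0"
  unfolding admissible_def by (cases "1 \<le> k \<and> k < K \<and> i < d k") auto

lemma hidden_eq_below:
  assumes "\<forall>m'\<le>m. fst \<theta>' m' = fst \<theta> m' \<and> snd \<theta>' m' = snd \<theta> m'"
  shows "hidden d t \<theta>' x m = hidden d t \<theta> x m"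
  using assms by (induction m) (auto simp: hidden.simps(2))

lemma hidden_eq_above:
  assumes "\<forall>m'>k. fst \<theta>' m' = fst \<theta> m' \<and> snd \<theta>' m' = snd \<theta> m'"
    and "hidden d t \<theta>' x k = hidden d t \<theta> x k" and "k \<le> m"
  shows "hidden d t \<theta>' x m = hidden d t \<theta> x m"
  using assms(3)
proof (induction m rule: dec_induct)
  case base
  then show ?case using assms(2) .
next
  case (step m)
  then show ?case using assms(1) by (auto simp: hidden.simps(2))
qed

lemma hidden_mono_above:
  assumes "\<forall>m'>k. fst \<theta>' m' = fst \<theta> m' \<and> snd \<theta>' m' = snd \<theta> m'"
    and "\<forall>m'>k. \<forall>i j. 0 \<le> fst \<theta> m' i j"
    and "\<forall>j. hidden d t \<theta>' x k j \<le> hidden d t \<theta> x k j" and "k \<le> m"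
  shows "hidden d t \<theta>' x m j \<le> hidden d t \<theta> x m j"
  using assms(4)
proof (induction m arbitrary: j rule: dec_induct)
  case base
  then show ?case using assms(3) by blast
next
  case (step m)
  then have "preact d t \<theta>' x (Suc m) j \<le> preact d t \<theta> x (Suc m) j"
    using assms(1,2) unfolding preact_def by (auto intro!: sum_mono mult_left_mono)
  then show ?case by (simp add: hidden_preact brelu_mono)
qed

lemma mvnn_mono_above:
  assumes "\<forall>m'>k. fst \<theta>' m' = fst \<theta> m' \<and> snd \<theta>' m' = snd \<theta> m'"
    and "\<forall>m'>k. \<forall>i j. 0 \<le> fst \<theta> m' i j"
    and "\<forall>j. hidden d t \<theta>' x k j \<le> hidden d t \<theta> x k j" and "k < K"
  shows "mvnn K d t \<theta>' x \<le> mvnn K d t \<theta> x"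
proof -
  have "hidden d t \<theta>' x (K - 1) j \<le> hidden d t \<theta> x (K - 1) j" for j
    using hidden_mono_above[OF assms(1-3)] assms(4) by simp
  then show ?thesis
    unfolding mvnn_def using assms(1,2,4) by (auto intro!: sum_mono mult_left_mono)
qed

definition shrink_row :: "nat \<Rightarrow> nat \<Rightarrow> real \<Rightarrow> real \<Rightarrow> params \<Rightarrow> params" where
  "shrink_row k i \<eta> a \<theta> =
     ((\<lambda>k' i' j. if k' = k \<and> i' = i then (1 - \<eta>) * fst \<theta> k' i' j else fst \<theta> k' i' j),
      (\<lambda>k' i'. if k' = k \<and> i' = i then (1 - \<eta>) * snd \<theta> k' i' + \<eta> * a else snd \<theta> k' i'))"

lemma admissible_shrink_row:
  assumes "admissible K d \<theta>" "1 \<le> k" "k < K" "i < d k" "0 \<le> \<eta>" "\<eta> \<le> 1"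
    and "(1 - \<eta>) * snd \<theta> k i + \<eta> * a \<le> 0"
  shows "admissible K d (shrink_row k i \<eta> a \<theta>)"
  using assms unfolding admissible_def shrink_row_def by auto

lemma hidden_shrink_row_below:
  "m < k \<Longrightarrow> hidden d t (shrink_row k i \<eta> a \<theta>) x m = hidden d t \<theta> x m"
  by (rule hidden_eq_below) (auto simp: shrink_row_def)

lemma preact_shrink_row:
  assumes "0 < k"
  shows "preact d t (shrink_row k i \<eta> a \<theta>) x k i = (1 - \<eta>) * preact d t \<theta> x k i + \<eta> * a"
proof -
  have "preact d t (shrink_row k i \<eta> a \<theta>) x k i
      = (1 - \<eta>) * (\<Sum>j<d (k - 1). fst \<theta> k i j * hidden d t \<theta> x (k - 1) j)
        + ((1 - \<eta>) * snd \<theta> k i + \<eta> * a)"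
    using assms
    by (simp add: preact_def hidden_shrink_row_below sum_distrib_left) (simp add: shrink_row_def mult.assoc)
  then show ?thesis by (simp add: preact_def sum_distrib_left algebra_simps)
qed

lemma preact_shrink_row_other:
  assumes "0 < k" "j \<noteq> i"
  shows "preact d t (shrink_row k i \<eta> a \<theta>) x k j = preact d t \<theta> x k j"
  using assms by (simp add: preact_def hidden_shrink_row_below) (simp add: shrink_row_def)

lemma hidden_shrink_row_other:
  assumes "0 < k" "j \<noteq> i"
  shows "hidden d t (shrink_row k i \<eta> a \<theta>) x k j = hidden d t \<theta> x k j"
  using assms preact_shrink_row_other by (simp add: hidden_preact)

lemma hidden_shrink_row_eq:
  assumes "0 < k" "hidden d t (shrink_row k i \<eta> a \<theta>) x k i = hidden d t \<theta> x k i"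
  shows "hidden d t (shrink_row k i \<eta> a \<theta>) x m = hidden d t \<theta> x m"
proof (cases "m < k")
  case True
  then show ?thesis by (rule hidden_shrink_row_below)
next
  case False
  have layer_k: "hidden d t (shrink_row k i \<eta> a \<theta>) x k = hidden d t \<theta> x k"
  proof
    fix j
    show "hidden d t (shrink_row k i \<eta> a \<theta>) x k j = hidden d t \<theta> x k j"
      using assms(2) hidden_shrink_row_other[OF assms(1)] by (cases "j = i") auto
  qed
  show ?thesis
    by (rule hidden_eq_above[OF _ layer_k]) (use False in \<open>auto simp: shrink_row_def\<close>)
qed

lemma preact_shrink_row_off_row:
  assumes "0 < k" "hidden d t (shrink_row k i \<eta> a \<theta>) x k i = hidden d t \<theta> x k i"
    and "(m, j) \<noteq> (k, i)"
  shows "preact d t (shrink_row k i \<eta> a \<theta>) x m j = preact d t \<theta> x m j"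
proof -
  have "fst (shrink_row k i \<eta> a \<theta>) m j = fst \<theta> m j" "snd (shrink_row k i \<eta> a \<theta>) m j = snd \<theta> m j"
    using assms(3) by (auto simp: shrink_row_def)
  then show ?thesis by (simp add: preact_def hidden_shrink_row_eq[OF assms(1,2)])
qed

lemma hidden_shrink_row_to_preact:
  assumes "0 < k"
  shows "hidden d t (shrink_row k i \<eta> (preact d t \<theta> x k i) \<theta>) x m = hidden d t \<theta> x m"
  by (rule hidden_shrink_row_eq) (use assms in \<open>simp_all add: hidden_preact preact_shrink_row algebra_simps\<close>)

lemma preact_shrink_row_to_preact:
  assumes "0 < k"
  shows "preact d t (shrink_row k i \<eta> (preact d t \<theta> x k i) \<theta>) x m j = preact d t \<theta> x m j"
proof (cases "(m, j) = (k, i)")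
  case True
  then show ?thesis using assms by (simp add: preact_shrink_row algebra_simps)
next
  case False
  show ?thesis
    using preact_shrink_row_off_row[OF assms _ False] assms by (simp add: hidden_shrink_row_to_preact)
qed

lemma mvnn_shrink_row_eq:
  assumes "0 < k" "k < K" "hidden d t (shrink_row k i \<eta> a \<theta>) x k i = hidden d t \<theta> x k i"
  shows "mvnn K d t (shrink_row k i \<eta> a \<theta>) x = mvnn K d t \<theta> x"
  using assms hidden_shrink_row_eq[OF assms(1,3)] by (simp add: mvnn_def) (simp add: shrink_row_def)

lemma mvnn_shrink_row_le:
  assumes "admissible K d \<theta>" "0 < k" "k < K"
    and "hidden d t (shrink_row k i \<eta> a \<theta>) x k i \<le> hidden d t \<theta> x k i"
  shows "mvnn K d t (shrink_row k i \<eta> a \<theta>) x \<le> mvnn K d t \<theta> x"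
proof (rule mvnn_mono_above[where k = k])
  show "\<forall>j. hidden d t (shrink_row k i \<eta> a \<theta>) x k j \<le> hidden d t \<theta> x k j"
  proof
    fix j
    show "hidden d t (shrink_row k i \<eta> a \<theta>) x k j \<le> hidden d t \<theta> x k j"
    proof (cases "j = i")
      case False
      then show ?thesis by (simp add: hidden_shrink_row_other[OF assms(2)])
    qed (use assms(4) in simp)
  qed
  show "\<forall>m'>k. fst (shrink_row k i \<eta> a \<theta>) m' = fst \<theta> m' \<and> snd (shrink_row k i \<eta> a \<theta>) m' = snd \<theta> m'"
    by (auto simp: shrink_row_def)
  show "\<forall>m'>k. \<forall>i j. 0 \<le> fst \<theta> m' i j"
    using admissible_weight_nonneg[OF assms(1)] by blast
qed (rule assms(3))

definition row_weight_normsq :: "(nat \<Rightarrow> nat) \<Rightarrow> params \<Rightarrow> nat \<Rightarrow> nat \<Rightarrow> real" where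
  "row_weight_normsq d \<theta> k i = (\<Sum>j<d (k - 1). (fst \<theta> k i j)\<^sup>2)"

lemma row_weight_normsq_nonneg: "0 \<le> row_weight_normsq d \<theta> k i"
  by (simp add: row_weight_normsq_def sum_nonneg)

lemma preact_eq_bias_if_row_weight_normsq_zero:
  assumes "row_weight_normsq d \<theta> k i = 0"
  shows "preact d t \<theta> x k i = snd \<theta> k i"
proof -
  have "\<forall>j\<in>{..<d (k - 1)}. (fst \<theta> k i j)\<^sup>2 = 0"
    using assms unfolding row_weight_normsq_def by (subst sum_nonneg_eq_0_iff[symmetric]) auto
  then show ?thesis by (simp add: preact_def)
qed

lemma sum_nested_change_one:
  fixes f g :: "'a \<Rightarrow> 'b \<Rightarrow> 'c::ab_group_add"
  assumes "finite A" "\<And>a'. a' \<in> A \<Longrightarrow> finite (B a')" "a \<in> A" "b \<in> B a"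
    and "\<And>a' b'. a' \<in> A \<Longrightarrow> b' \<in> B a' \<Longrightarrow> (a', b') \<noteq> (a, b) \<Longrightarrow> f a' b' = g a' b'"
  shows "(\<Sum>a'\<in>A. \<Sum>b'\<in>B a'. f a' b') = (\<Sum>a'\<in>A. \<Sum>b'\<in>B a'. g a' b') + (f a b - g a b)"
proof -
  have fin: "finite (Sigma A B)" and ab: "(a, b) \<in> Sigma A B"
    using assms(1-4) by auto
  have split: "(\<Sum>a'\<in>A. \<Sum>b'\<in>B a'. h a' b') = h a b + (\<Sum>(a', b')\<in>Sigma A B - {(a, b)}. h a' b')"
    for h :: "_ \<Rightarrow> _ \<Rightarrow> 'c::ab_group_add"
    using assms(1,2) sum.remove[OF fin ab, of "\<lambda>(a', b'). h a' b'"] by (simp add: sum.Sigma)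
  have "(\<Sum>(a', b')\<in>Sigma A B - {(a, b)}. f a' b') = (\<Sum>(a', b')\<in>Sigma A B - {(a, b)}. g a' b')"
    using assms(5) by (intro sum.cong) auto
  then show ?thesis
    unfolding split[of f] split[of g] by simp
qed

lemma param_normsq_change_row:
  assumes "1 \<le> k" "k < K" "i < d k"
    and "\<And>k' i' j. (k', i') \<noteq> (k, i) \<Longrightarrow> fst \<theta>' k' i' j = fst \<theta> k' i' j"
    and "\<And>k' i'. (k', i') \<noteq> (k, i) \<Longrightarrow> snd \<theta>' k' i' = snd \<theta> k' i'"
  shows "param_normsq K d \<theta>' = param_normsq K d \<theta>
           + (row_weight_normsq d \<theta>' k i - row_weight_normsq d \<theta> k i)
           + ((snd \<theta>' k i)\<^sup>2 - (snd \<theta> k i)\<^sup>2)"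
proof -
  have "(\<Sum>k'\<in>{1..K}. \<Sum>i'<d k'. row_weight_normsq d \<theta>' k' i')
      = (\<Sum>k'\<in>{1..K}. \<Sum>i'<d k'. row_weight_normsq d \<theta> k' i')
        + (row_weight_normsq d \<theta>' k i - row_weight_normsq d \<theta> k i)"
    using assms by (intro sum_nested_change_one) (auto simp: row_weight_normsq_def)
  moreover have "(\<Sum>k'\<in>{1..<K}. \<Sum>i'<d k'. (snd \<theta>' k' i')\<^sup>2)
      = (\<Sum>k'\<in>{1..<K}. \<Sum>i'<d k'. (snd \<theta> k' i')\<^sup>2) + ((snd \<theta>' k i)\<^sup>2 - (snd \<theta> k i)\<^sup>2)"
    using assms by (intro sum_nested_change_one) auto
  ultimately show ?thesis
    by (simp add: param_normsq_def row_weight_normsq_def)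
qed

lemma param_normsq_shrink_row:
  assumes "1 \<le> k" "k < K" "i < d k"
  shows "param_normsq K d (shrink_row k i \<eta> a \<theta>) = param_normsq K d \<theta>
           + ((1 - \<eta>)\<^sup>2 - 1) * row_weight_normsq d \<theta> k i
           + (((1 - \<eta>) * snd \<theta> k i + \<eta> * a)\<^sup>2 - (snd \<theta> k i)\<^sup>2)"
proof -
  have "param_normsq K d (shrink_row k i \<eta> a \<theta>) = param_normsq K d \<theta>
           + (row_weight_normsq d (shrink_row k i \<eta> a \<theta>) k i - row_weight_normsq d \<theta> k i)
           + ((snd (shrink_row k i \<eta> a \<theta>) k i)\<^sup>2 - (snd \<theta> k i)\<^sup>2)"
    by (rule param_normsq_change_row) (use assms in \<open>auto simp: shrink_row_def\<close>)
  moreover have "row_weight_normsq d (shrink_row k i \<eta> a \<theta>) k i = (1 - \<eta>)\<^sup>2 * row_weight_normsq d \<theta> k i"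
    by (simp add: row_weight_normsq_def shrink_row_def power_mult_distrib sum_distrib_left)
  ultimately show ?thesis
    by (simp add: shrink_row_def algebra_simps)
qed

lemma param_normsq_scale_row:
  assumes "1 \<le> k" "k < K" "i < d k"
  shows "param_normsq K d (shrink_row k i \<eta> 0 \<theta>) = param_normsq K d \<theta>
           + ((1 - \<eta>)\<^sup>2 - 1) * (row_weight_normsq d \<theta> k i + (snd \<theta> k i)\<^sup>2)"
  using param_normsq_shrink_row[where K = K and d = d, OF assms, of \<eta> 0 \<theta>]
  by (simp add: power_mult_distrib) (simp add: algebra_simps)

lemma param_normsq_diff_shrink_row:
  assumes "1 \<le> k" "k < K" "i < d k"
  shows "param_normsq K d (param_diff (shrink_row k i \<eta> a \<theta>) \<theta>)
           = \<eta>\<^sup>2 * (row_weight_normsq d \<theta> k i + (a - snd \<theta> k i)\<^sup>2)"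
proof -
  define zero :: params where "zero = ((\<lambda>_ _ _. 0), (\<lambda>_ _. 0))"
  have "param_normsq K d (param_diff (shrink_row k i \<eta> a \<theta>) \<theta>) = param_normsq K d zero
           + (row_weight_normsq d (param_diff (shrink_row k i \<eta> a \<theta>) \<theta>) k i - row_weight_normsq d zero k i)
           + ((snd (param_diff (shrink_row k i \<eta> a \<theta>) \<theta>) k i)\<^sup>2 - (snd zero k i)\<^sup>2)"
    by (rule param_normsq_change_row)
      (use assms in \<open>auto simp: shrink_row_def param_diff_def zero_def\<close>)
  moreover have "row_weight_normsq d (param_diff (shrink_row k i \<eta> a \<theta>) \<theta>) k i = \<eta>\<^sup>2 * row_weight_normsq d \<theta> k i"
    by (simp add: row_weight_normsq_def param_diff_def shrink_row_def power_mult_distrib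
        sum_distrib_left algebra_simps)
  moreover have "snd (param_diff (shrink_row k i \<eta> a \<theta>) \<theta>) k i = \<eta> * (a - snd \<theta> k i)"
    by (simp add: param_diff_def shrink_row_def algebra_simps)
  ultimately show ?thesis
    by (simp add: zero_def param_normsq_def row_weight_normsq_def power_mult_distrib)
      (simp add: power2_eq_square algebra_simps)
qed

locale mvnn_arch =
  fixes K :: nat and d :: "nat \<Rightarrow> nat" and t :: "nat \<Rightarrow> real"
  assumes K_pos: "1 \<le> K" and cutoff_pos: "\<And>k. 1 \<le> k \<Longrightarrow> k < K \<Longrightarrow> 0 < t k"
begin

definition unsaturated_at :: "params \<Rightarrow> nat \<Rightarrow> bool" where
  "unsaturated_at \<theta> x \<longleftrightarrow> (\<forall>m j. 1 \<le> m \<longrightarrow> m < K \<longrightarrow> preact d t \<theta> x m j \<le> t m)"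

lemma hidden_at_zero:
  assumes "admissible K d \<theta>"
  shows "m < K \<Longrightarrow> hidden d t \<theta> 0 m j = 0"
proof (induction m arbitrary: j)
  case (Suc m)
  then show ?case
    using cutoff_pos[of "Suc m"] admissible_bias_nonpos[OF assms]
    by (simp add: hidden_preact preact_def brelu_nonpos)
qed simp

lemma mvnn_at_zero: "admissible K d \<theta> \<Longrightarrow> mvnn K d t \<theta> 0 = 0"
  using hidden_at_zero K_pos by (simp add: mvnn_def)

lemma hidden_subhomogeneous:
  assumes "admissible K d \<theta>" "unsaturated_at \<theta> 10" "x \<le> 10"
  shows "m < K \<Longrightarrow> hidden d t \<theta> x m j \<le> real x / 10 * hidden d t \<theta> 10 m j"
proof (induction m arbitrary: j)
  case (Suc m)
  define s where "s = real x / 10"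
  have s: "0 \<le> s" "s \<le> 1" using assms(3) by (auto simp: s_def)
  have "(\<Sum>l<d m. fst \<theta> (Suc m) j l * hidden d t \<theta> x m l)
      \<le> (\<Sum>l<d m. fst \<theta> (Suc m) j l * (s * hidden d t \<theta> 10 m l))"
    using Suc admissible_weight_nonneg[OF assms(1)] unfolding s_def
    by (intro sum_mono mult_left_mono) auto
  moreover have "snd \<theta> (Suc m) j \<le> s * snd \<theta> (Suc m) j"
    using mult_right_mono_neg[OF s(2) admissible_bias_nonpos[OF assms(1)]] by simp
  ultimately have "preact d t \<theta> x (Suc m) j \<le> s * preact d t \<theta> 10 (Suc m) j"
    by (simp add: preact_def sum_distrib_left algebra_simps)
  then have "hidden d t \<theta> x (Suc m) j \<le> brelu (t (Suc m)) (s * preact d t \<theta> 10 (Suc m) j)"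
    by (simp add: hidden_preact brelu_mono)
  also have "\<dots> \<le> s * hidden d t \<theta> 10 (Suc m) j"
    using s Suc.prems cutoff_pos[of "Suc m"] assms(2)
    by (simp add: hidden_preact brelu_scale_le unsaturated_at_def)
  finally show ?case by (simp add: s_def)
qed simp

lemma hidden_superhomogeneous:
  assumes "admissible K d \<theta>" "\<forall>k i. snd \<theta> k i = 0" "x \<le> 10"
  shows "m < K \<Longrightarrow> real x / 10 * hidden d t \<theta> 10 m j \<le> hidden d t \<theta> x m j"
proof (induction m arbitrary: j)
  case (Suc m)
  define s where "s = real x / 10"
  have s: "0 \<le> s" "s \<le> 1" using assms(3) by (auto simp: s_def)
  have "(\<Sum>l<d m. fst \<theta> (Suc m) j l * (s * hidden d t \<theta> 10 m l))
      \<le> (\<Sum>l<d m. fst \<theta> (Suc m) j l * hidden d t \<theta> x m l)"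
    using Suc admissible_weight_nonneg[OF assms(1)] unfolding s_def
    by (intro sum_mono mult_left_mono) auto
  then have "s * preact d t \<theta> 10 (Suc m) j \<le> preact d t \<theta> x (Suc m) j"
    using assms(2) by (simp add: preact_def sum_distrib_left algebra_simps)
  have "s * hidden d t \<theta> 10 (Suc m) j \<le> brelu (t (Suc m)) (s * preact d t \<theta> 10 (Suc m) j)"
    using s Suc.prems cutoff_pos[of "Suc m"] by (simp add: hidden_preact brelu_scale_ge)
  also have "\<dots> \<le> hidden d t \<theta> x (Suc m) j"
    using \<open>s * preact d t \<theta> 10 (Suc m) j \<le> preact d t \<theta> x (Suc m) j\<close>
    by (simp add: hidden_preact brelu_mono)
  finally show ?case by (simp add: s_def)
qed simp

lemma mvnn_subhomogeneous:
  assumes "admissible K d \<theta>" "unsaturated_at \<theta> 10" "x \<le> 10"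
  shows "mvnn K d t \<theta> x \<le> real x / 10 * mvnn K d t \<theta> 10"
proof -
  have "mvnn K d t \<theta> x \<le> (\<Sum>j<d (K - 1). fst \<theta> K 0 j * (real x / 10 * hidden d t \<theta> 10 (K - 1) j))"
    unfolding mvnn_def
    using hidden_subhomogeneous[OF assms] K_pos admissible_weight_nonneg[OF assms(1)]
    by (intro sum_mono mult_left_mono) auto
  then show ?thesis
    by (simp add: mvnn_def sum_distrib_left algebra_simps)
qed

lemma mvnn_linear:
  assumes "admissible K d \<theta>" "unsaturated_at \<theta> 10" "\<forall>k i. snd \<theta> k i = 0" "x \<le> 10"
  shows "mvnn K d t \<theta> x = real x / 10 * mvnn K d t \<theta> 10"
proof -
  have last_layer: "hidden d t \<theta> x (K - 1) j = real x / 10 * hidden d t \<theta> 10 (K - 1) j" for j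
    using hidden_subhomogeneous[OF assms(1,2,4)] hidden_superhomogeneous[OF assms(1,3,4)] K_pos
    by (intro antisym) simp_all
  show ?thesis
    unfolding mvnn_def last_layer by (simp add: sum_distrib_left algebra_simps)
qed

end

locale mvnn_local_min = mvnn_arch +
  fixes Ps :: "real set" and resp :: "real \<Rightarrow> nat" and xhat :: "params \<Rightarrow> real \<Rightarrow> nat"
    and lam :: real and \<theta>s :: params
  assumes resp_corner: "\<And>p. p \<in> Ps \<Longrightarrow> resp p = 0 \<or> resp p = 10"
    and xhat_le: "\<And>\<theta> p. xhat \<theta> p \<le> 10"
    and xhat_argmax: "\<And>\<theta> p x. x \<le> 10 \<Longrightarrow>
          mvnn K d t \<theta> x - p * real x \<le> mvnn K d t \<theta> (xhat \<theta> p) - p * real (xhat \<theta> p)"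
    and lam_pos: "0 < lam"
    and admissible_min: "admissible K d \<theta>s"
    and local_min: "\<exists>\<epsilon>>0. \<forall>\<theta>. admissible K d \<theta> \<and> sqrt (param_normsq K d (param_diff \<theta> \<theta>s)) < \<epsilon>
          \<longrightarrow> loss K d t Ps resp xhat lam \<theta>s \<le> loss K d t Ps resp xhat lam \<theta>"
begin

definition fit_error :: "params \<Rightarrow> real" where
  "fit_error \<theta> = (\<Sum>p\<in>Ps. pos_part ((mvnn K d t \<theta> (xhat \<theta> p) - p * real (xhat \<theta> p))
                                  - (mvnn K d t \<theta> (resp p) - p * real (resp p))))"

lemma loss_eq_fit_error: "loss K d t Ps resp xhat lam \<theta> = fit_error \<theta> + lam * param_normsq K d \<theta>"
  by (simp add: loss_def fit_error_def)

lemma max_utility_mono: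
  assumes "admissible K d \<theta>"
    and "\<And>x. x \<le> 10 \<Longrightarrow> mvnn K d t \<theta>' x \<le> max (mvnn K d t \<theta> x) (real x / 10 * mvnn K d t \<theta> 10)"
  shows "mvnn K d t \<theta>' (xhat \<theta>' p) - p * real (xhat \<theta>' p)
           \<le> mvnn K d t \<theta> (xhat \<theta> p) - p * real (xhat \<theta> p)"
proof -
  define x' where "x' = xhat \<theta>' p"
  define V where "V = mvnn K d t \<theta> (xhat \<theta> p) - p * real (xhat \<theta> p)"
  have x': "x' \<le> 10" by (simp add: x'_def xhat_le)
  have V: "mvnn K d t \<theta> x - p * real x \<le> V" if "x \<le> 10" for x
    using xhat_argmax[OF that] by (simp add: V_def)
  have scaled_le: "s * y \<le> max 0 y" if "0 \<le> s" "s \<le> 1" for s y :: real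
    using that by (cases "0 \<le> y") (auto simp: mult_left_le_one_le mult_nonneg_nonpos max_def)
  have "real x' / 10 * (mvnn K d t \<theta> 10 - 10 * p) \<le> max 0 (mvnn K d t \<theta> 10 - 10 * p)"
    by (rule scaled_le) (use x' in auto)
  also have "\<dots> \<le> V"
    using V[of 0] V[of 10] mvnn_at_zero[OF assms(1)] by (simp add: mult.commute)
  finally have "real x' / 10 * mvnn K d t \<theta> 10 - p * real x' \<le> V"
    by (simp add: algebra_simps)
  then show ?thesis
    using assms(2)[OF x'] V[OF x'] unfolding x'_def[symmetric] V_def[symmetric] by linarith
qed

lemma fit_error_mono:
  assumes "admissible K d \<theta>'" "admissible K d \<theta>" "mvnn K d t \<theta>' 10 = mvnn K d t \<theta> 10"
    and "\<And>x. x \<le> 10 \<Longrightarrow> mvnn K d t \<theta>' x \<le> max (mvnn K d t \<theta> x) (real x / 10 * mvnn K d t \<theta> 10)"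
  shows "fit_error \<theta>' \<le> fit_error \<theta>"
  unfolding fit_error_def
proof (rule sum_mono)
  fix p assume "p \<in> Ps"
  then have "mvnn K d t \<theta>' (resp p) = mvnn K d t \<theta> (resp p)"
    using resp_corner assms(3) mvnn_at_zero[OF assms(1)] mvnn_at_zero[OF assms(2)] by fastforce
  then show "pos_part ((mvnn K d t \<theta>' (xhat \<theta>' p) - p * real (xhat \<theta>' p))
                          - (mvnn K d t \<theta>' (resp p) - p * real (resp p)))
           \<le> pos_part ((mvnn K d t \<theta> (xhat \<theta> p) - p * real (xhat \<theta> p))
                          - (mvnn K d t \<theta> (resp p) - p * real (resp p)))"
    using max_utility_mono[OF assms(2,4), of p] by (simp add: pos_part_def)
qed

lemma shrink_row_no_descent:
  assumes "1 \<le> k" "k < K" "i < d k"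
    and "\<forall>\<^sub>F \<eta> in at_right 0. admissible K d (shrink_row k i \<eta> a \<theta>s)
           \<and> fit_error (shrink_row k i \<eta> a \<theta>s) \<le> fit_error \<theta>s
           \<and> param_normsq K d (shrink_row k i \<eta> a \<theta>s) < param_normsq K d \<theta>s"
  shows False
proof -
  obtain \<epsilon> where "0 < \<epsilon>" and min: "\<And>\<theta>. admissible K d \<theta> \<Longrightarrow> sqrt (param_normsq K d (param_diff \<theta> \<theta>s)) < \<epsilon>
      \<Longrightarrow> loss K d t Ps resp xhat lam \<theta>s \<le> loss K d t Ps resp xhat lam \<theta>"
    using local_min by blast
  define C where "C = row_weight_normsq d \<theta>s k i + (a - snd \<theta>s k i)\<^sup>2"
  have "((\<lambda>\<eta>. sqrt (\<eta>\<^sup>2 * C)) \<longlongrightarrow> sqrt (0\<^sup>2 * C)) (at_right 0)"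
    by (intro tendsto_intros)
  then have "\<forall>\<^sub>F \<eta> in at_right 0. sqrt (\<eta>\<^sup>2 * C) < \<epsilon>"
    using \<open>0 < \<epsilon>\<close> by (intro order_tendstoD(2)) simp_all
  then have "\<forall>\<^sub>F \<eta> in at_right 0. sqrt (param_normsq K d (param_diff (shrink_row k i \<eta> a \<theta>s) \<theta>s)) < \<epsilon>"
    using assms(1-3) by (simp add: param_normsq_diff_shrink_row C_def)
  then have "\<forall>\<^sub>F \<eta> in at_right (0::real). False"
    using assms(4)
  proof eventually_elim
    case (elim \<eta>)
    then have "loss K d t Ps resp xhat lam \<theta>s \<le> loss K d t Ps resp xhat lam (shrink_row k i \<eta> a \<theta>s)"
      by (intro min) simp_all
    moreover have "lam * param_normsq K d (shrink_row k i \<eta> a \<theta>s) < lam * param_normsq K d \<theta>s"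
      using elim lam_pos by simp
    ultimately show False
      using elim by (simp add: loss_eq_fit_error)
  qed
  then show False by (simp add: eventually_False)
qed

lemma no_flat_nonzero_row:
  assumes k: "1 \<le> k" "k < K" "i < d k"
    and row_nonzero: "0 < row_weight_normsq d \<theta>s k i + (snd \<theta>s k i)\<^sup>2"
    and flat: "preact d t \<theta>s 10 k i \<le> 0 \<or> t k < preact d t \<theta>s 10 k i"
  shows False
proof (rule shrink_row_no_descent[OF k, of 0])
  have "0 < t k" using k cutoff_pos by simp
  show "\<forall>\<^sub>F \<eta> in at_right 0. admissible K d (shrink_row k i \<eta> 0 \<theta>s)
           \<and> fit_error (shrink_row k i \<eta> 0 \<theta>s) \<le> fit_error \<theta>s
           \<and> param_normsq K d (shrink_row k i \<eta> 0 \<theta>s) < param_normsq K d \<theta>s"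
    using eventually_brelu_shrink_eq[OF \<open>0 < t k\<close> flat] eventually_at_right_real[OF zero_less_one]
  proof eventually_elim
    case (elim \<eta>)
    then have \<eta>: "0 < \<eta>" "\<eta> < 1" by simp_all
    have adm: "admissible K d (shrink_row k i \<eta> 0 \<theta>s)"
      using \<eta> admissible_bias_nonpos[OF admissible_min]
      by (intro admissible_shrink_row[OF admissible_min k]) (simp_all add: mult_nonneg_nonpos)
    have "hidden d t (shrink_row k i \<eta> 0 \<theta>s) 10 k i = hidden d t \<theta>s 10 k i"
      using elim k by (simp add: hidden_preact preact_shrink_row)
    then have top: "mvnn K d t (shrink_row k i \<eta> 0 \<theta>s) 10 = mvnn K d t \<theta>s 10"
      using k by (simp add: mvnn_shrink_row_eq)
    have "mvnn K d t (shrink_row k i \<eta> 0 \<theta>s) x \<le> mvnn K d t \<theta>s x" for x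
      using k \<eta> \<open>0 < t k\<close>
      by (intro mvnn_shrink_row_le[OF admissible_min])
        (simp_all add: hidden_preact preact_shrink_row brelu_scale_le_self)
    then have fit: "fit_error (shrink_row k i \<eta> 0 \<theta>s) \<le> fit_error \<theta>s"
      by (intro fit_error_mono[OF adm admissible_min top]) (simp add: le_max_iff_disj)
    have "((1 - \<eta>)\<^sup>2 - 1) * (row_weight_normsq d \<theta>s k i + (snd \<theta>s k i)\<^sup>2) < 0"
      using \<eta> row_nonzero by (intro mult_neg_pos) (simp_all add: power_less_one_iff)
    then have "param_normsq K d (shrink_row k i \<eta> 0 \<theta>s) < param_normsq K d \<theta>s"
      using param_normsq_scale_row[where K = K and d = d, OF k, of \<eta> \<theta>s] by simp
    with adm fit show ?case by simp
  qed
qed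

lemma unsaturated_min: "unsaturated_at \<theta>s 10"
  unfolding unsaturated_at_def
proof (intro allI impI)
  fix k i assume k: "1 \<le> k" "k < K"
  have "0 < t k" using k cutoff_pos by simp
  show "preact d t \<theta>s 10 k i \<le> t k"
  proof (cases "i < d k")
    case False
    then have "preact d t \<theta>s 10 k i = 0"
      using admissible_min unfolding admissible_def preact_def by simp
    with \<open>0 < t k\<close> show ?thesis by simp
  next
    case True
    show ?thesis
    proof (rule ccontr)
      assume saturated: "\<not> preact d t \<theta>s 10 k i \<le> t k"
      have "row_weight_normsq d \<theta>s k i \<noteq> 0"
      proof
        assume "row_weight_normsq d \<theta>s k i = 0"
        then have "preact d t \<theta>s 10 k i = snd \<theta>s k i"
          by (rule preact_eq_bias_if_row_weight_normsq_zero)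
        then show False
          using saturated \<open>0 < t k\<close> admissible_bias_nonpos[OF admissible_min, of k i] by simp
      qed
      then have "0 < row_weight_normsq d \<theta>s k i + (snd \<theta>s k i)\<^sup>2"
        using row_weight_normsq_nonneg[of d \<theta>s k i] by (simp add: add_pos_nonneg)
      then show False
        using no_flat_nonzero_row[OF k True] saturated by simp
    qed
  qed
qed

lemma no_active_negative_bias:
  assumes k: "1 \<le> k" "k < K" "i < d k"
    and "snd \<theta>s k i < 0" and "0 < preact d t \<theta>s 10 k i"
  shows False
proof -
  define b where "b = snd \<theta>s k i"
  define z where "z = preact d t \<theta>s 10 k i"
  have "((\<lambda>\<eta>. (1 - \<eta>) * b + \<eta> * z) \<longlongrightarrow> (1 - 0) * b + 0 * z) (at_right 0)"
    by (intro tendsto_intros)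
  then have "\<forall>\<^sub>F \<eta> in at_right 0. (1 - \<eta>) * b + \<eta> * z < 0"
    using assms(4) by (intro order_tendstoD(2)) (simp_all add: b_def)
  then show False
    using eventually_at_right_real[OF zero_less_one]
  proof (intro shrink_row_no_descent[OF k, of z], eventually_elim)
    case (elim \<eta>)
    then have \<eta>: "0 < \<eta>" "\<eta> < 1" by simp_all
    let ?\<theta>' = "shrink_row k i \<eta> z \<theta>s"
    have adm: "admissible K d ?\<theta>'"
      using \<eta> elim by (intro admissible_shrink_row[OF admissible_min k]) (simp_all add: b_def)
    have top: "mvnn K d t ?\<theta>' 10 = mvnn K d t \<theta>s 10"
      using k by (simp add: mvnn_shrink_row_eq hidden_shrink_row_to_preact z_def)
    have "unsaturated_at ?\<theta>' 10"
      using unsaturated_min k by (simp add: unsaturated_at_def preact_shrink_row_to_preact z_def)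
    then have "mvnn K d t ?\<theta>' x \<le> real x / 10 * mvnn K d t \<theta>s 10" if "x \<le> 10" for x
      using mvnn_subhomogeneous[OF adm _ that] top by simp
    then have fit: "fit_error ?\<theta>' \<le> fit_error \<theta>s"
      by (intro fit_error_mono[OF adm admissible_min top]) (simp add: le_max_iff_disj)
    have "((1 - \<eta>)\<^sup>2 - 1) * row_weight_normsq d \<theta>s k i \<le> 0"
      using \<eta> row_weight_normsq_nonneg by (intro mult_nonpos_nonneg) (simp_all add: power_le_one)
    moreover have "(- ((1 - \<eta>) * b + \<eta> * z))\<^sup>2 < (- b)\<^sup>2"
      using elim \<eta> assms(4,5) by (intro power_strict_mono) (simp_all add: b_def z_def algebra_simps)
    ultimately have "param_normsq K d ?\<theta>' < param_normsq K d \<theta>s"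
      using param_normsq_shrink_row[where K = K and d = d, OF k, of \<eta> z \<theta>s]
      by (simp only: power2_minus) (simp add: b_def)
    with adm fit show ?case by simp
  qed
qed

lemma bias_zero_min: "snd \<theta>s k i = 0"
proof (rule ccontr)
  assume nonzero: "snd \<theta>s k i \<noteq> 0"
  then have k: "1 \<le> k" "k < K" "i < d k"
    using admissible_min unfolding admissible_def by blast+
  have "0 < row_weight_normsq d \<theta>s k i + (snd \<theta>s k i)\<^sup>2"
    using nonzero row_weight_normsq_nonneg[of d \<theta>s k i] by (simp add: add_nonneg_pos)
  then have "0 < preact d t \<theta>s 10 k i"
    using no_flat_nonzero_row[OF k] by force
  moreover have "snd \<theta>s k i < 0"
    using nonzero admissible_bias_nonpos[OF admissible_min, of k i] by simp
  ultimately show False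
    using no_active_negative_bias[OF k] by blast
qed

end

theorem propositionC5:
  fixes K :: nat and d :: "nat \<Rightarrow> nat" and t :: "nat \<Rightarrow> real"
    and Ps :: "real set" and resp :: "real \<Rightarrow> nat"
    and xhat :: "params \<Rightarrow> real \<Rightarrow> nat" and lam :: real and \<theta>s :: params
  assumes K: "K \<ge> 1"
    and d_in: "d 0 = 1" and d_out: "d K = 1"
    and d_pos: "\<forall>k. 1 \<le> k \<and> k < K \<longrightarrow> d k \<ge> 1"
    and t_pos: "\<forall>k. 1 \<le> k \<and> k < K \<longrightarrow> t k > 0"
    and Ps_fin: "finite Ps" and Ps_nonneg: "\<forall>p\<in>Ps. p \<ge> 0"
    and resp_lt: "\<forall>p\<in>Ps. p < 94/10 \<longrightarrow> resp p = 10"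
    and resp_eq: "\<forall>p\<in>Ps. p = 94/10 \<longrightarrow> resp p = 10 \<or> resp p = 0"
    and resp_gt: "\<forall>p\<in>Ps. p > 94/10 \<longrightarrow> resp p = 0"
    and xhat_argmax: "\<forall>\<theta> p. xhat \<theta> p \<in> {0..10} \<and>
         (\<forall>x\<in>{0..10::nat}. mvnn K d t \<theta> x - p * real x
                            \<le> mvnn K d t \<theta> (xhat \<theta> p) - p * real (xhat \<theta> p))"
    and lam: "lam > 0"
    and adm: "admissible K d \<theta>s"
    and locmin: "\<exists>\<epsilon>>0. \<forall>\<theta>. admissible K d \<theta> \<and> sqrt (param_normsq K d (param_diff \<theta> \<theta>s)) < \<epsilon>
                   \<longrightarrow> loss K d t Ps resp xhat lam \<theta>s \<le> loss K d t Ps resp xhat lam \<theta>"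
  shows "\<exists>\<alpha>::real. \<forall>x\<in>{0..10::nat}. mvnn K d t \<theta>s x = \<alpha> * real x"
proof -
  have resp_corner: "resp p = 0 \<or> resp p = 10" if "p \<in> Ps" for p
    using that resp_lt resp_eq resp_gt by (metis linorder_neqE_linordered_idom)
  interpret mvnn_local_min K d t Ps resp xhat lam \<theta>s
    using K t_pos resp_corner xhat_argmax lam adm locmin by unfold_locales auto
  have "\<forall>k i. snd \<theta>s k i = 0" using bias_zero_min by blast
  then have "mvnn K d t \<theta>s x = mvnn K d t \<theta>s 10 / 10 * real x" if "x \<le> 10" for x
    using mvnn_linear[OF admissible_min unsaturated_min _ that] by simp
  then show ?thesis by (intro exI[of _ "mvnn K d t \<theta>s 10 / 10"] ballI) simp
qed

end
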